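(* Let $\rho$ be a normal ruling of a front of a Legendrian link $\Lambda$. For any choice of orientations of $\Lambda$ and of $\Lambda^\rho$, \[ \mathrm{rlk}_2(\rho)\equiv \tfrac12\big(tb(\Lambda)+\chi(\rho)+2e_2(\rho)\big) \pmod 2, \] where $2e_2(\rho)$ is understood as $2(s_-(\rho)+f_+-f_-)$ computed from these orientations.
   Context: Normal ruling: fix a front diagram of $\Lambda$ whose crossings and cusps have distinct $x$-coordinates. A normal ruling $\rho$ is a set of crossings (switches) such that, letting $\Lambda^\rho$ be the front obtained by resolving each switch into two horizontal non-crossing segments: (i) each component of $\Lambda^\rho$ is planar isotopic to the standard front of the maximal-$tb$ Legendrian unknot; (ii) exactly two components of $\Lambda^\rho$ are incident to each switch; (iii) in a small vertical strip around each switch, the two incident ruling disks are either nested or disjoint. $\chi(\rho)=c(\Lambda)-s(\rho)$ with $c(\Lambda)$ the number of right cusps and $s(\rho)$ the number of switches. Given orientations $o$ of $\Lambda$ and $o^\rho$ of $\Lambda^\rho$: $s_-(\rho)$ is the number of negative switches (w.r.t. $o$); a crossing of $\Lambda^\rho$ is flipped if its signs w.r.t. $o$ and $o^\rho$ differ; $f_\pm$ is the number of flipped crossings that are positive/negative w.r.t. $o^\rho$. The unoriented resolution linking number $\mathrm{rlk}_2(\rho)$ is the mod $2$ reduction of the sum of the pairwise linking numbers of the components of $\Lambda^\rho$, with any chosen orientation of the components. *)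

theory Defs
  imports Main
begin

text \<open>A generic front (crossings and cusps at distinct x-coordinates) is read from left
to right as a list of events. Between consecutive events there is a vertical slice;
slice i (for i = 0 .. length evs) lies just left of event i (slice length evs is at the far
right). In slice i the strands are numbered 0 .. width evs i - 1 by increasing height.
  Cr k : crossing of the strands at positions k and k+1;
  LC k : left cusp creating two new strands at positions k, k+1 (strands at positions
         j >= k move up by 2);
  RC k : right cusp joining the strands at positions k, k+1 (strands above move down by 2).\<close>

datatype event = Cr nat | LC nat | RC nat

fun epos :: "event \<Rightarrow> nat" where
  "epos (Cr k) = k" | "epos (LC k) = k" | "epos (RC k) = k"

primrec width :: "event list \<Rightarrow> nat \<Rightarrow> nat" where
  "width evs 0 = 0"
| "width evs (Suc i) =
     (case evs ! i of Cr _ \<Rightarrow> width evs i | LC _ \<Rightarrow> width evs i + 2 | RC _ \<Rightarrow> width evs i - 2)"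

definition wf_front :: "event list \<Rightarrow> bool" where
  "wf_front evs \<longleftrightarrow>
     (\<forall>i < length evs. case evs ! i of
         Cr k \<Rightarrow> Suc k < width evs i
       | LC k \<Rightarrow> k \<le> width evs i
       | RC k \<Rightarrow> Suc k < width evs i)
   \<and> width evs (length evs) = 0"

definition points :: "event list \<Rightarrow> (nat \<times> nat) set" where
  "points evs = {(i, j). i \<le> length evs \<and> j < width evs i}"

definition crossings :: "event list \<Rightarrow> nat set" where
  "crossings evs = {i. i < length evs \<and> (\<exists>k. evs ! i = Cr k)}"

definition lcusps :: "event list \<Rightarrow> nat set" where
  "lcusps evs = {i. i < length evs \<and> (\<exists>k. evs ! i = LC k)}"

definition rcusps :: "event list \<Rightarrow> nat set" where
  "rcusps evs = {i. i < length evs \<and> (\<exists>k. evs ! i = RC k)}"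

definition sw :: "nat \<Rightarrow> nat \<Rightarrow> nat" where
  "sw k j = (if j = k then Suc k else if j = Suc k then k else j)"

text \<open>Position in slice i+1 of the continuation of the strand at position j of slice i,
in the front obtained by resolving the crossings in S (S = {} gives the front itself).
At a resolved crossing (switch) the two strands continue horizontally.\<close>

definition nxt :: "event list \<Rightarrow> nat set \<Rightarrow> nat \<Rightarrow> nat \<Rightarrow> nat option" where
  "nxt evs S i j = (case evs ! i of
      Cr k \<Rightarrow> Some (if i \<in> S then j else sw k j)
    | LC k \<Rightarrow> Some (if j < k then j else j + 2)
    | RC k \<Rightarrow> (if j < k then Some j else if Suc k < j then Some (j - 2) else None))"

definition cont_edges :: "event list \<Rightarrow> nat set \<Rightarrow> ((nat \<times> nat) \<times> (nat \<times> nat)) set" where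
  "cont_edges evs S = {((i, j), (Suc i, j')) | i j j'.
      i < length evs \<and> j < width evs i \<and> nxt evs S i j = Some j'}"

definition cusp_edges :: "event list \<Rightarrow> ((nat \<times> nat) \<times> (nat \<times> nat)) set" where
  "cusp_edges evs =
     {((Suc i, k), (Suc i, Suc k)) | i k. i < length evs \<and> evs ! i = LC k}
   \<union> {((i, k), (i, Suc k)) | i k. i < length evs \<and> evs ! i = RC k}"

definition edges :: "event list \<Rightarrow> nat set \<Rightarrow> ((nat \<times> nat) \<times> (nat \<times> nat)) set" where
  "edges evs S = cont_edges evs S \<union> cusp_edges evs"

definition comp :: "event list \<Rightarrow> nat set \<Rightarrow> nat \<times> nat \<Rightarrow> (nat \<times> nat) set" where
  "comp evs S p = {q. (p, q) \<in> (edges evs S \<union> (edges evs S)\<inverse>)\<^sup>*}"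

definition components :: "event list \<Rightarrow> nat set \<Rightarrow> (nat \<times> nat) set set" where
  "components evs S = comp evs S ` points evs"

text \<open>An orientation assigns to every strand point whether it points to the right (True)
or to the left (False); it is constant along strands and reverses at cusps.\<close>

definition is_orientation :: "event list \<Rightarrow> nat set \<Rightarrow> (nat \<times> nat \<Rightarrow> bool) \<Rightarrow> bool" where
  "is_orientation evs S ori \<longleftrightarrow>
     (\<forall>(p, q) \<in> cont_edges evs S. ori p = ori q) \<and>
     (\<forall>(p, q) \<in> cusp_edges evs. ori p \<noteq> ori q)"

definition csign :: "event list \<Rightarrow> (nat \<times> nat \<Rightarrow> bool) \<Rightarrow> nat \<Rightarrow> int" where
  "csign evs ori i =
     (if ori (i, epos (evs ! i)) = ori (i, Suc (epos (evs ! i))) then 1 else -1)"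

definition writhe :: "event list \<Rightarrow> (nat \<times> nat \<Rightarrow> bool) \<Rightarrow> int" where
  "writhe evs ori = (\<Sum>i \<in> crossings evs. csign evs ori i)"

definition tb :: "event list \<Rightarrow> (nat \<times> nat \<Rightarrow> bool) \<Rightarrow> int" where
  "tb evs ori = writhe evs ori - int (card (rcusps evs))"

definition nested_or_disjoint :: "nat \<Rightarrow> nat \<Rightarrow> nat \<Rightarrow> nat \<Rightarrow> bool" where
  "nested_or_disjoint a1 b1 a2 b2 \<longleftrightarrow>
     (let I1 = {min a1 b1 .. max a1 b1}; I2 = {min a2 b2 .. max a2 b2}
      in I1 \<subseteq> I2 \<or> I2 \<subseteq> I1 \<or> I1 \<inter> I2 = {})"

text \<open>Normal ruling with switch set S.
 (i) every component of the resolved front is planar isotopic to the standard eye front: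
     it has exactly one left cusp, exactly one right cusp and no self-crossing;
 (ii) the two strands at each switch belong to two different components;
 (iii) near each switch the two ruling disks (vertical extents of the two incident
     components in the slice at the switch) are nested or disjoint.\<close>

definition normal_ruling :: "event list \<Rightarrow> nat set \<Rightarrow> bool" where
  "normal_ruling evs S \<longleftrightarrow>
     S \<subseteq> crossings evs \<and>
     (\<forall>C \<in> components evs S.
        card {i \<in> lcusps evs. comp evs S (Suc i, epos (evs ! i)) = C} = 1 \<and>
        card {i \<in> rcusps evs. comp evs S (i, epos (evs ! i)) = C} = 1 \<and>
        (\<forall>i \<in> crossings evs - S.
           \<not> (comp evs S (i, epos (evs ! i)) = C \<and> comp evs S (i, Suc (epos (evs ! i))) = C))) \<and>
     (\<forall>i \<in> S. comp evs S (i, epos (evs ! i)) \<noteq> comp evs S (i, Suc (epos (evs ! i)))) \<and>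
     (\<forall>i \<in> S. \<forall>a b. a < width evs i \<and> b < width evs i \<and>
         a \<noteq> epos (evs ! i) \<and> b \<noteq> Suc (epos (evs ! i)) \<and>
         (i, a) \<in> comp evs S (i, epos (evs ! i)) \<and>
         (i, b) \<in> comp evs S (i, Suc (epos (evs ! i))) \<longrightarrow>
         nested_or_disjoint (epos (evs ! i)) a (Suc (epos (evs ! i))) b)"

definition chi :: "event list \<Rightarrow> nat set \<Rightarrow> int" where
  "chi evs S = int (card (rcusps evs)) - int (card S)"

definition s_minus :: "event list \<Rightarrow> nat set \<Rightarrow> (nat \<times> nat \<Rightarrow> bool) \<Rightarrow> int" where
  "s_minus evs S ori = int (card {i \<in> S. csign evs ori i = -1})"

definition flipped :: "event list \<Rightarrow> nat set \<Rightarrow> (nat \<times> nat \<Rightarrow> bool) \<Rightarrow> (nat \<times> nat \<Rightarrow> bool) \<Rightarrow> nat set" where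
  "flipped evs S ori orr = {i \<in> crossings evs - S. csign evs ori i \<noteq> csign evs orr i}"

definition f_plus :: "event list \<Rightarrow> nat set \<Rightarrow> (nat \<times> nat \<Rightarrow> bool) \<Rightarrow> (nat \<times> nat \<Rightarrow> bool) \<Rightarrow> int" where
  "f_plus evs S ori orr = int (card {i \<in> flipped evs S ori orr. csign evs orr i = 1})"

definition f_minus :: "event list \<Rightarrow> nat set \<Rightarrow> (nat \<times> nat \<Rightarrow> bool) \<Rightarrow> (nat \<times> nat \<Rightarrow> bool) \<Rightarrow> int" where
  "f_minus evs S ori orr = int (card {i \<in> flipped evs S ori orr. csign evs orr i = -1})"

definition lk_pair :: "event list \<Rightarrow> nat set \<Rightarrow> (nat \<times> nat \<Rightarrow> bool) \<Rightarrow> (nat \<times> nat) set set \<Rightarrow> int" where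
  "lk_pair evs S orr P =
     (\<Sum>i \<in> {i \<in> crossings evs - S.
              {comp evs S (i, epos (evs ! i)), comp evs S (i, Suc (epos (evs ! i)))} = P}.
        csign evs orr i) div 2"

definition rlk2 :: "event list \<Rightarrow> nat set \<Rightarrow> (nat \<times> nat \<Rightarrow> bool) \<Rightarrow> int" where
  "rlk2 evs S orr =
     (\<Sum>P \<in> {P. \<exists>C \<in> components evs S. \<exists>D \<in> components evs S. C \<noteq> D \<and> P = {C, D}}.
        lk_pair evs S orr P) mod 2"

end

(* Off the switches, the sign of a crossing with respect to the orientation of the resolved
   front differs from its sign with respect to the orientation of the link exactly at the
   flipped crossings, and the switches themselves contribute card S - 2 s_-.  Hence
   tb + chi + 2 e_2 is the sum of the resolved signs of the non-switch crossings.  A normal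
   ruling has no non-switch self-crossings of a component, so this sum splits over pairs of
   distinct components, the part of a pair being twice its linking number -- provided that
   two distinct components C, D of the resolved front cross an even number of times.  This
   follows by sweeping the front from left to right: in each vertical slice count the pairs
   of a C-strand below a D-strand.  The count changes parity exactly at the crossings of C
   with D, cusps insert or delete two adjacent strands of one component, and the count
   vanishes at both ends. *)

theory Submission
  imports Defs
begin

fun pairs_before :: "'a \<Rightarrow> 'a \<Rightarrow> 'a list \<Rightarrow> nat" where
  "pairs_before a b [] = 0"
| "pairs_before a b (x # xs) = (if x = a then count_list xs b else 0) + pairs_before a b xs"

lemma pairs_before_append:
  "pairs_before a b (xs @ ys) =
     pairs_before a b xs + pairs_before a b ys + count_list xs a * count_list ys b"
  by (induction xs) (auto simp: algebra_simps)

lemma even_pairs_before_transpose_iff: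
  assumes "a \<noteq> b"
  shows "even (pairs_before a b (xs @ [x, y] @ ys) + pairs_before a b (xs @ [y, x] @ ys))
         \<longleftrightarrow> {x, y} \<noteq> {a, b}"
  using assms by (auto simp: pairs_before_append doubleton_eq_iff)

lemma even_pairs_before_insert_double:
  assumes "a \<noteq> b"
  shows "even (pairs_before a b (xs @ [x, x] @ ys) + pairs_before a b (xs @ ys))"
  using assms by (auto simp: pairs_before_append)

lemma take_transpose_drop_nth:
  assumes "Suc k < length xs" "j < length xs"
  shows "(take k xs @ [xs ! Suc k, xs ! k] @ drop (Suc (Suc k)) xs) ! j = xs ! sw k j"
proof -
  have "drop (Suc (Suc k)) xs ! (j - Suc (Suc k)) = xs ! j" if "Suc (Suc k) \<le> j"
    using assms that by (simp add: Suc_diff_Suc numeral_2_eq_2)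
  then show ?thesis
    using assms by (auto simp: nth_append nth_Cons' sw_def min_def)
qed

lemma take_nth_nth_drop:
  "Suc k < length xs \<Longrightarrow> take k xs @ [xs ! k, xs ! Suc k] @ drop (Suc (Suc k)) xs = xs"
  by (simp add: Cons_nth_drop_Suc)

lemma take_double_drop_nth:
  assumes "k \<le> length xs" "j < length xs + 2"
  shows "(take k xs @ [x, x] @ drop k xs) ! j =
           (if j < k then xs ! j else if j < k + 2 then x else xs ! (j - 2))"
  using assms by (auto simp: nth_append nth_Cons' min_def)

lemma wf_front_event:
  assumes "wf_front evs" "i < length evs"
  shows "evs ! i = Cr k \<Longrightarrow> Suc k < width evs i"
    and "evs ! i = LC k \<Longrightarrow> k \<le> width evs i"
    and "evs ! i = RC k \<Longrightarrow> Suc k < width evs i"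
  using assms by (auto simp: wf_front_def)

definition strand_invariant :: "event list \<Rightarrow> nat set \<Rightarrow> (nat \<times> nat \<Rightarrow> 'a) \<Rightarrow> bool" where
  "strand_invariant evs S L \<longleftrightarrow> (\<forall>(p, q) \<in> edges evs S. L p = L q)"

definition slice :: "event list \<Rightarrow> (nat \<times> nat \<Rightarrow> 'a) \<Rightarrow> nat \<Rightarrow> 'a list" where
  "slice evs L i = map (\<lambda>j. L (i, j)) [0..<width evs i]"

lemma length_slice [simp]: "length (slice evs L i) = width evs i"
  by (simp add: slice_def)

lemma nth_slice [simp]: "j < width evs i \<Longrightarrow> slice evs L i ! j = L (i, j)"
  by (simp add: slice_def)

lemma strand_invariant_nxt:
  assumes "strand_invariant evs S L" "i < length evs" "j < width evs i" "nxt evs S i j = Some j'"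
  shows "L (Suc i, j') = L (i, j)"
proof -
  have "((i, j), (Suc i, j')) \<in> edges evs S"
    using assms(2-) unfolding edges_def cont_edges_def by blast
  then show ?thesis using assms(1) unfolding strand_invariant_def by fastforce
qed

lemma strand_invariant_cusp:
  assumes "strand_invariant evs S L" "i < length evs"
  shows "evs ! i = LC k \<Longrightarrow> L (Suc i, Suc k) = L (Suc i, k)"
    and "evs ! i = RC k \<Longrightarrow> L (i, Suc k) = L (i, k)"
proof -
  have "((Suc i, k), (Suc i, Suc k)) \<in> edges evs S" if "evs ! i = LC k"
    using assms(2) that unfolding edges_def cusp_edges_def by blast
  moreover have "((i, k), (i, Suc k)) \<in> edges evs S" if "evs ! i = RC k"
    using assms(2) that unfolding edges_def cusp_edges_def by blast
  ultimately show "evs ! i = LC k \<Longrightarrow> L (Suc i, Suc k) = L (Suc i, k)"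
    and "evs ! i = RC k \<Longrightarrow> L (i, Suc k) = L (i, k)"
    using assms(1) unfolding strand_invariant_def by fastforce+
qed

definition crossings_between :: "event list \<Rightarrow> nat set \<Rightarrow> (nat \<times> nat \<Rightarrow> 'a) \<Rightarrow> 'a \<Rightarrow> 'a \<Rightarrow> nat set" where
  "crossings_between evs S L a b =
     {i \<in> crossings evs - S. {L (i, epos (evs ! i)), L (i, Suc (epos (evs ! i)))} = {a, b}}"

context
  fixes evs :: "event list" and S :: "nat set" and L :: "nat \<times> nat \<Rightarrow> 'a" and i :: nat
  assumes wf: "wf_front evs" and i: "i < length evs" and inv: "strand_invariant evs S L"
begin

lemma slice_Suc_switch:
  assumes "evs ! i = Cr k" "i \<in> S"
  shows "slice evs L (Suc i) = slice evs L i"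
proof (rule nth_equalityI)
  fix j assume "j < length (slice evs L (Suc i))"
  then show "slice evs L (Suc i) ! j = slice evs L i ! j"
    using strand_invariant_nxt[OF inv i, of j j] assms by (simp add: nxt_def)
qed (use assms in simp)

lemma slice_Suc_crossing:
  assumes "evs ! i = Cr k" "i \<notin> S"
  defines "xs \<equiv> slice evs L i"
  shows "slice evs L (Suc i) = take k xs @ [xs ! Suc k, xs ! k] @ drop (Suc (Suc k)) xs"
proof (rule nth_equalityI)
  have k: "Suc k < width evs i" using wf_front_event(1)[OF wf i assms(1)] .
  fix j assume "j < length (slice evs L (Suc i))"
  then have j: "j < width evs i" "sw k j < width evs i" using assms k by (auto simp: sw_def)
  have "L (Suc i, j) = L (i, sw k j)"
    using strand_invariant_nxt[OF inv i j(2), of j] assms by (simp add: nxt_def sw_def)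
  then show "slice evs L (Suc i) ! j = (take k xs @ [xs ! Suc k, xs ! k] @ drop (Suc (Suc k)) xs) ! j"
    using take_transpose_drop_nth[of k xs j] j k assms(1) by (simp add: xs_def)
qed (use assms wf_front_event(1)[OF wf i] in auto)

lemma slice_Suc_left_cusp:
  assumes "evs ! i = LC k"
  defines "xs \<equiv> slice evs L i"
  shows "slice evs L (Suc i) = take k xs @ [L (Suc i, k), L (Suc i, k)] @ drop k xs"
proof (rule nth_equalityI)
  have k: "k \<le> width evs i" using wf_front_event(2)[OF wf i assms(1)] .
  fix j assume "j < length (slice evs L (Suc i))"
  then have j: "j < width evs i + 2" using assms by simp
  have "L (Suc i, j) = L (i, j)" if "j < k"
    using strand_invariant_nxt[OF inv i, of j j] that k assms by (simp add: nxt_def)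
  moreover have "L (Suc i, j) = L (i, j - 2)" if "k + 2 \<le> j"
  proof -
    have "j - 2 < width evs i" "\<not> j - 2 < k" "j - 2 + 2 = j" using that j by arith+
    then show ?thesis using strand_invariant_nxt[OF inv i, of "j - 2" j] assms by (simp add: nxt_def)
  qed
  moreover have "L (Suc i, j) = L (Suc i, k)" if "k \<le> j" "j < k + 2"
  proof -
    have "j = k \<or> j = Suc k" using that by arith
    then show ?thesis using strand_invariant_cusp(1)[OF inv i assms(1)] by auto
  qed
  ultimately show "slice evs L (Suc i) ! j = (take k xs @ [L (Suc i, k), L (Suc i, k)] @ drop k xs) ! j"
    using take_double_drop_nth[of k xs j "L (Suc i, k)"] j k assms(1) by (auto simp: xs_def)
qed (use assms wf_front_event(2)[OF wf i] in auto)

lemma slice_right_cusp: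
  assumes "evs ! i = RC k"
  defines "ys \<equiv> slice evs L (Suc i)"
  shows "slice evs L i = take k ys @ [L (i, k), L (i, k)] @ drop k ys"
proof (rule nth_equalityI)
  have k: "Suc k < width evs i" using wf_front_event(3)[OF wf i assms(1)] .
  fix j assume "j < length (slice evs L i)"
  then have j: "j < width evs i" by simp
  have "L (i, j) = L (Suc i, j)" if "j < k"
    using strand_invariant_nxt[OF inv i j, of j] that assms by (simp add: nxt_def)
  moreover have "L (i, j) = L (Suc i, j - 2)" if "k + 2 \<le> j"
    using strand_invariant_nxt[OF inv i j, of "j - 2"] that assms by (simp add: nxt_def)
  moreover have "L (i, j) = L (i, k)" if "k \<le> j" "j < k + 2"
  proof -
    have "j = k \<or> j = Suc k" using that by arith
    then show ?thesis using strand_invariant_cusp(2)[OF inv i assms(1)] by auto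
  qed
  ultimately show "slice evs L i ! j = (take k ys @ [L (i, k), L (i, k)] @ drop k ys) ! j"
    using take_double_drop_nth[of k ys j "L (i, k)"] j k assms(1) by (auto simp: ys_def)
qed (use assms wf_front_event(3)[OF wf i] in auto)

lemma even_pairs_before_slice_Suc_iff:
  assumes "a \<noteq> b"
  shows "even (pairs_before a b (slice evs L (Suc i)) + pairs_before a b (slice evs L i))
         \<longleftrightarrow> i \<notin> crossings_between evs S L a b"
proof (cases "evs ! i")
  case (Cr k)
  show ?thesis
  proof (cases "i \<in> S")
    case True
    then show ?thesis using slice_Suc_switch[OF Cr] by (simp add: crossings_between_def)
  next
    case False
    let ?xs = "slice evs L i"
    have k: "Suc k < length ?xs" using wf_front_event(1)[OF wf i Cr] by simp
    have "i \<in> crossings_between evs S L a b \<longleftrightarrow> {?xs ! Suc k, ?xs ! k} = {a, b}"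
      using False Cr i k by (auto simp: crossings_between_def crossings_def)
    moreover have "even (pairs_before a b (take k ?xs @ [?xs ! Suc k, ?xs ! k] @ drop (Suc (Suc k)) ?xs)
        + pairs_before a b (take k ?xs @ [?xs ! k, ?xs ! Suc k] @ drop (Suc (Suc k)) ?xs))
        \<longleftrightarrow> {?xs ! Suc k, ?xs ! k} \<noteq> {a, b}"
      by (rule even_pairs_before_transpose_iff[OF assms])
    ultimately show ?thesis
      unfolding slice_Suc_crossing[OF Cr False] take_nth_nth_drop[OF k] by blast
  qed
next
  case (LC k)
  then show ?thesis
    using even_pairs_before_insert_double[OF assms] slice_Suc_left_cusp[OF LC]
    by (simp add: crossings_between_def crossings_def)
next
  case (RC k)
  then show ?thesis
    using even_pairs_before_insert_double[OF assms] slice_right_cusp[OF RC]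
    by (simp add: crossings_between_def crossings_def add.commute)
qed

end

lemma even_card_crossings_between:
  assumes wf: "wf_front evs" and inv: "strand_invariant evs S L" and "a \<noteq> b"
  shows "even (card (crossings_between evs S L a b))"
proof -
  let ?X = "crossings_between evs S L a b"
  have "even (pairs_before a b (slice evs L n) + card (?X \<inter> {..<n}))" if "n \<le> length evs" for n
    using that
  proof (induction n)
    case 0
    then show ?case by (simp add: slice_def)
  next
    case (Suc n)
    have "?X \<inter> {..<Suc n} = (if n \<in> ?X then insert n (?X \<inter> {..<n}) else ?X \<inter> {..<n})"
      by (auto simp: lessThan_Suc)
    then show ?case
      using Suc even_pairs_before_slice_Suc_iff[OF wf _ inv assms(3), of n] by auto
  qed
  moreover have "slice evs L (length evs) = []" "?X \<subseteq> {..<length evs}"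
    using wf by (auto simp: slice_def wf_front_def crossings_between_def crossings_def)
  ultimately show ?thesis by (metis Int_absorb2 le_refl pairs_before.simps(1) add_0)
qed

lemma comp_eq_if_edge:
  assumes "(p, q) \<in> edges evs S"
  shows "comp evs S p = comp evs S q"
proof -
  let ?R = "edges evs S \<union> (edges evs S)\<inverse>"
  have pq: "(p, q) \<in> ?R" and qp: "(q, p) \<in> ?R" using assms by auto
  show ?thesis
    unfolding comp_def
    using converse_rtrancl_into_rtrancl[OF pq] converse_rtrancl_into_rtrancl[OF qp] by blast
qed

lemma strand_invariant_comp: "strand_invariant evs S (comp evs S)"
  by (auto simp: strand_invariant_def comp_eq_if_edge)

definition component_pairs :: "event list \<Rightarrow> nat set \<Rightarrow> (nat \<times> nat) set set set" where
  "component_pairs evs S =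
     {P. \<exists>C \<in> components evs S. \<exists>D \<in> components evs S. C \<noteq> D \<and> P = {C, D}}"

lemma finite_crossings: "finite (crossings evs)"
  by (rule finite_subset[of _ "{..<length evs}"]) (auto simp: crossings_def)

lemma finite_component_pairs: "finite (component_pairs evs S)"
proof -
  have "points evs = (SIGMA i:{..length evs}. {..<width evs i})" by (auto simp: points_def)
  then have "finite (components evs S)" by (simp add: components_def)
  moreover have "component_pairs evs S \<subseteq> (\<lambda>(C, D). {C, D}) ` (components evs S \<times> components evs S)"
    by (auto simp: component_pairs_def)
  ultimately show ?thesis by (simp add: finite_subset)
qed

lemma normal_ruling_crossing_component_pair:
  assumes "wf_front evs" "normal_ruling evs S" "i \<in> crossings evs - S"
  shows "{comp evs S (i, epos (evs ! i)), comp evs S (i, Suc (epos (evs ! i)))} \<in> component_pairs evs S"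
proof -
  obtain k where i: "i < length evs" "evs ! i = Cr k" using assms(3) by (auto simp: crossings_def)
  have "Suc k < width evs i" using wf_front_event(1)[OF assms(1) i] .
  then have C: "comp evs S (i, k) \<in> components evs S" and D: "comp evs S (i, Suc k) \<in> components evs S"
    using i by (auto simp: components_def points_def)
  have "\<forall>C \<in> components evs S. \<forall>j \<in> crossings evs - S.
      \<not> (comp evs S (j, epos (evs ! j)) = C \<and> comp evs S (j, Suc (epos (evs ! j))) = C)"
    using assms(2) unfolding normal_ruling_def by blast
  then have "\<not> (comp evs S (i, k) = comp evs S (i, k) \<and> comp evs S (i, Suc k) = comp evs S (i, k))"
    using C assms(3) i(2) by (metis epos.simps(1))
  then show ?thesis using C D i(2) by (auto simp: component_pairs_def)
qed

lemma csign_cases: "csign evs ori i = 1 \<or> csign evs ori i = -1"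
  by (simp add: csign_def)

lemma even_sum_pm1_iff:
  assumes "finite A" "\<forall>i \<in> A. f i = (1::int) \<or> f i = -1"
  shows "even (sum f A) \<longleftrightarrow> even (card A)"
  using assms by (induction A rule: finite_induct) auto

lemma two_sum_lk_pair_eq_sum_csign:
  assumes wf: "wf_front evs" and nr: "normal_ruling evs S"
  shows "2 * (\<Sum>P \<in> component_pairs evs S. lk_pair evs S orr P) = (\<Sum>i \<in> crossings evs - S. csign evs orr i)"
proof -
  let ?N = "crossings evs - S"
  let ?pair = "\<lambda>i. {comp evs S (i, epos (evs ! i)), comp evs S (i, Suc (epos (evs ! i)))}"
  let ?T = "\<lambda>P. \<Sum>i \<in> {i \<in> ?N. ?pair i = P}. csign evs orr i"
  have fN: "finite ?N" using finite_crossings by blast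
  have "even (?T P)" if pair: "P \<in> component_pairs evs S" for P
  proof -
    obtain C D where CD: "C \<noteq> D" and P: "P = {C, D}"
      using pair unfolding component_pairs_def by blast
    have "even (card (crossings_between evs S (comp evs S) C D))"
      using even_card_crossings_between[OF wf strand_invariant_comp CD] .
    moreover have "{i \<in> ?N. ?pair i = P} = crossings_between evs S (comp evs S) C D"
      by (simp add: crossings_between_def P)
    moreover have "finite {i \<in> ?N. ?pair i = P}" by (rule finite_subset[OF _ fN]) auto
    ultimately show ?thesis
      using even_sum_pm1_iff[of "{i \<in> ?N. ?pair i = P}" "csign evs orr"] csign_cases by simp
  qed
  then have "2 * (\<Sum>P \<in> component_pairs evs S. lk_pair evs S orr P) = (\<Sum>P \<in> component_pairs evs S. ?T P)"
    unfolding sum_distrib_left lk_pair_def by (intro sum.cong refl) simp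
  also have "\<dots> = (\<Sum>i \<in> ?N. csign evs orr i)"
  proof (rule sum.group[OF fN finite_component_pairs])
    show "?pair ` ?N \<subseteq> component_pairs evs S"
      using normal_ruling_crossing_component_pair[OF wf nr] by blast
  qed
  finally show ?thesis .
qed

lemma sum_csign_switches:
  assumes "finite S"
  shows "(\<Sum>i \<in> S. csign evs ori i) = int (card S) - 2 * s_minus evs S ori"
proof -
  have "(\<Sum>i \<in> S. csign evs ori i) = (\<Sum>i \<in> S. 1 - 2 * of_bool (csign evs ori i = -1))"
    by (rule sum.cong) (auto simp: csign_def)
  also have "\<dots> = int (card S) - 2 * s_minus evs S ori"
    using assms
    by (simp add: sum_subtractf sum_distrib_left[symmetric] s_minus_def Collect_conj_eq Int_commute)
  finally show ?thesis .
qed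

lemma sum_csign_non_switches:
  "(\<Sum>i \<in> crossings evs - S. csign evs ori i) =
     (\<Sum>i \<in> crossings evs - S. csign evs orr i) - 2 * f_plus evs S ori orr + 2 * f_minus evs S ori orr"
proof -
  let ?N = "crossings evs - S" and ?F = "flipped evs S ori orr"
  have "(\<Sum>i \<in> ?N. csign evs ori i) = (\<Sum>i \<in> ?N. csign evs orr i
          - 2 * of_bool (i \<in> ?F \<and> csign evs orr i = 1) + 2 * of_bool (i \<in> ?F \<and> csign evs orr i = -1))"
    by (rule sum.cong) (auto simp: csign_def flipped_def)
  moreover have "?N \<inter> {i \<in> ?F. P i} = {i \<in> ?F. P i}" for P
    by (auto simp: flipped_def)
  ultimately show ?thesis
    using finite_crossings[of evs]
    by (simp add: sum_subtractf sum.distrib sum_distrib_left[symmetric] f_plus_def f_minus_def)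
qed

lemma tb_chi_e2_eq_sum_csign_non_switches:
  assumes "S \<subseteq> crossings evs"
  shows "tb evs ori + chi evs S + 2 * (s_minus evs S ori + f_plus evs S ori orr - f_minus evs S ori orr)
       = (\<Sum>i \<in> crossings evs - S. csign evs orr i)"
proof -
  have fS: "finite S" using finite_subset[OF assms finite_crossings] .
  have "writhe evs ori = (\<Sum>i \<in> S. csign evs ori i) + (\<Sum>i \<in> crossings evs - S. csign evs ori i)"
    unfolding writhe_def using sum.subset_diff[OF assms finite_crossings] by (simp add: add.commute)
  then show ?thesis
    using sum_csign_switches[OF fS] sum_csign_non_switches[where ori = ori and orr = orr]
    by (simp add: tb_def chi_def)
qed

theorem lemma3p10:
  fixes evs :: "event list" and S :: "nat set" and ori orr :: "nat \<times> nat \<Rightarrow> bool"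
  assumes "wf_front evs"
    and "normal_ruling evs S"
    and "is_orientation evs {} ori"
    and "is_orientation evs S orr"
  shows "(2 * rlk2 evs S orr) mod 4 =
         (tb evs ori + chi evs S
            + 2 * (s_minus evs S ori + f_plus evs S ori orr - f_minus evs S ori orr)) mod 4"
proof -
  have switches: "S \<subseteq> crossings evs" using assms(2) by (simp add: normal_ruling_def)
  define X where "X = (\<Sum>P \<in> component_pairs evs S. lk_pair evs S orr P)"
  have "rlk2 evs S orr = X mod 2"
    by (simp add: rlk2_def X_def component_pairs_def)
  then have "(2 * rlk2 evs S orr) mod 4 = (2 * X) mod 4"
    using mod_mult_mult1[of 2 X 2] by simp
  also have "2 * X = (\<Sum>i \<in> crossings evs - S. csign evs orr i)"
    unfolding X_def by (rule two_sum_lk_pair_eq_sum_csign[OF assms(1,2)])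
  also have "\<dots> = tb evs ori + chi evs S
      + 2 * (s_minus evs S ori + f_plus evs S ori orr - f_minus evs S ori orr)"
    by (rule tb_chi_e2_eq_sum_csign_non_switches[OF switches, symmetric])
  finally show ?thesis .
qed

end
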